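(* Let $i,j$ be positive integers with $i\mid j$, and write $i=uv$, where $v$ is the largest divisor of $i$ coprime with $j/i$. Let $C_j$ be a cyclic group of order $j$ and $C_i$ its (unique) subgroup of order $i$. Then (1) every element of a generating coset of $C_j/C_i$ has order divisible by $j/v$; (2) if $d\mid v$, then the number of elements of order $jd/v$ in a generating coset of $C_j/C_i$ is $u\,\phi(d)$, where $\phi$ is Euler's totient function.
   Context: A generating coset of $C_j/C_i$ is a coset of $C_i$ in $C_j$ which generates the quotient group $C_j/C_i$. *)

theory Defs
  imports "HOL-Algebra.Algebra" "HOL-Number_Theory.Totient"
begin

definition largest_coprime_divisor :: "nat \<Rightarrow> nat \<Rightarrow> nat" where
  "largest_coprime_divisor i k = Max {w. w dvd i \<and> coprime w k}"

definition generating_coset :: "('a, 'b) monoid_scheme \<Rightarrow> 'a set \<Rightarrow> 'a set \<Rightarrow> bool" where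
  "generating_coset G H C \<longleftrightarrow>
     C \<in> rcosets\<^bsub>G\<^esub> H \<and> generate (G Mod H) {C} = carrier (G Mod H)"

end

theory Submission
  imports Defs
begin

text \<open>Write \<open>j = i k\<close> and fix a generator \<open>g\<close> of \<open>C\<^sub>j\<close>. Then \<open>C\<^sub>i\<close> consists of the powers
  \<open>g\<^bsup>k t\<^esup>\<close>, \<open>t < i\<close>, so every coset of \<open>C\<^sub>i\<close> is \<open>{g\<^bsup>c + k t\<^esup> | t < i}\<close>, and it generates the
  quotient exactly when \<open>c\<close> is coprime to \<open>k\<close>. For exponents \<open>a\<close> coprime to \<open>k\<close> the gcd of \<open>a\<close>
  and \<open>j\<close> equals the gcd of \<open>a\<close> and \<open>v\<close>, so \<open>g\<^bsup>c + k t\<^esup>\<close> has order \<open>j / gcd(c + k t, v)\<close>, which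
  gives (1). Since \<open>k\<close> is invertible modulo \<open>v\<close>, as \<open>t\<close> runs through \<open>[0, i) = [0, u v)\<close> the
  residue of \<open>c + k t\<close> modulo \<open>v\<close> runs \<open>u\<close> times through all residues, and exactly \<open>\<phi>(d)\<close> of
  these have gcd \<open>v / d\<close> with \<open>v\<close>; this gives (2).\<close>

lemma largest_coprime_divisor_mem:
  assumes "i > 0"
  shows "largest_coprime_divisor i k dvd i \<and> coprime (largest_coprime_divisor i k) k"
proof -
  have "finite {w. w dvd i \<and> coprime w k}"
    using assms by (auto intro: finite_subset[of _ "{..i}"] dvd_imp_le)
  moreover have "1 \<in> {w. w dvd i \<and> coprime w k}" by simp
  ultimately show ?thesis
    unfolding largest_coprime_divisor_def by (metis (mono_tags) Max_in empty_iff mem_Collect_eq)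
qed

lemma largest_coprime_divisor_dvd: "i > 0 \<Longrightarrow> largest_coprime_divisor i k dvd i"
  using largest_coprime_divisor_mem by blast

lemma coprime_largest_coprime_divisor: "i > 0 \<Longrightarrow> coprime (largest_coprime_divisor i k) k"
  using largest_coprime_divisor_mem by blast

lemma dvd_largest_coprime_divisor:
  assumes "i > 0" "w dvd i" "coprime w k"
  shows "w dvd largest_coprime_divisor i k"
proof -
  let ?v = "largest_coprime_divisor i k"
  have "lcm w ?v dvd i"
    using assms largest_coprime_divisor_dvd[OF assms(1)] by (simp add: lcm_least)
  moreover have "coprime (lcm w ?v) k"
  proof (rule coprime_divisors)
    show "lcm w ?v dvd w * ?v" "k dvd k" by (simp_all add: lcm_least)
    show "coprime (w * ?v) k"
      using assms(3) coprime_largest_coprime_divisor[OF assms(1)] by simp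
  qed
  ultimately have "lcm w ?v \<le> ?v"
    unfolding largest_coprime_divisor_def
    using assms(1) by (intro Max_ge) (auto intro: finite_subset[of _ "{..i}"] dvd_imp_le)
  moreover have "lcm w ?v > 0"
    using assms largest_coprime_divisor_dvd[OF assms(1), of k] by (auto intro!: lcm_pos_nat gr0I)
  moreover have "?v dvd lcm w ?v" by simp
  ultimately have "lcm w ?v = ?v"
    by (meson dvd_imp_le le_antisym)
  then show ?thesis by (metis dvd_lcm1)
qed

lemma gcd_eq_gcd_largest_coprime_divisor:
  assumes "i > 0" "coprime a k"
  shows "gcd a (i * k) = gcd a (largest_coprime_divisor i k)"
proof (rule dvd_antisym)
  have "coprime (gcd a (i * k)) k"
    using assms(2) by (rule coprime_imp_coprime) auto
  then have "gcd a (i * k) dvd i"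
    by (meson coprime_dvd_mult_left_iff gcd_dvd2)
  then show "gcd a (i * k) dvd gcd a (largest_coprime_divisor i k)"
    using assms(1) \<open>coprime (gcd a (i * k)) k\<close> by (simp add: dvd_largest_coprime_divisor)
  show "gcd a (largest_coprime_divisor i k) dvd gcd a (i * k)"
    using largest_coprime_divisor_dvd[OF assms(1)] by (meson dvd_mult2 gcd_dvd1 gcd_dvd2 gcd_greatest dvd_trans)
qed

lemma card_periodic_below_mult:
  fixes P :: "nat \<Rightarrow> bool"
  assumes periodic: "\<And>t. P (t + v) = P t"
  shows "card {t. t < n * v \<and> P t} = n * card {t. t < v \<and> P t}"
proof -
  have P_shift: "P (m * v + r) = P r" for m r
  proof (induction m)
    case (Suc m)
    then show ?case using periodic[of "m * v + r"] by (simp add: ac_simps)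
  qed simp
  have "bij_betw (\<lambda>(q, r). q * v + r) ({..<n} \<times> {r. r < v \<and> P r}) {t. t < n * v \<and> P t}"
  proof (rule bij_betw_imageI)
    show "inj_on (\<lambda>(q, r). q * v + r) ({..<n} \<times> {r. r < v \<and> P r})"
    proof (rule inj_onI, clarify)
      fix q r q' r' assume "r < v" "r' < v" and eq: "q * v + r = q' * v + r'"
      have "(q * v + r) div v = (q' * v + r') div v" "(q * v + r) mod v = (q' * v + r') mod v"
        using eq by simp_all
      then show "q = q' \<and> r = r'"
        using \<open>r < v\<close> \<open>r' < v\<close> by simp
    qed
    show "(\<lambda>(q, r). q * v + r) ` ({..<n} \<times> {r. r < v \<and> P r}) = {t. t < n * v \<and> P t}"
    proof
      show "(\<lambda>(q, r). q * v + r) ` ({..<n} \<times> {r. r < v \<and> P r}) \<subseteq> {t. t < n * v \<and> P t}"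
      proof clarify
        fix q r assume "q < n" "r < v" "P r"
        have "q * v + r < Suc q * v" using \<open>r < v\<close> by simp
        also have "\<dots> \<le> n * v" using \<open>q < n\<close> by (intro mult_le_mono1) simp
        finally show "q * v + r < n * v \<and> P (q * v + r)"
          using \<open>P r\<close> P_shift by simp
      qed
    next
      show "{t. t < n * v \<and> P t} \<subseteq> (\<lambda>(q, r). q * v + r) ` ({..<n} \<times> {r. r < v \<and> P r})"
      proof
        fix t assume t: "t \<in> {t. t < n * v \<and> P t}"
        then have "v > 0" by (cases v) auto
        moreover have "t div v < n"
          using t by (simp add: less_mult_imp_div_less)
        moreover have "P (t mod v)"
          using t P_shift[of "t div v" "t mod v"] by simp
        ultimately have "t div v < n" "t mod v < v" "P (t mod v)"
          by simp_all
        then show "t \<in> (\<lambda>(q, r). q * v + r) ` ({..<n} \<times> {r. r < v \<and> P r})"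
          by (intro image_eqI[of _ _ "(t div v, t mod v)"]) simp_all
      qed
    qed
  qed
  from bij_betw_same_card[OF this] show ?thesis
    by (simp add: card_cartesian_product)
qed

lemma card_filter_bij_betw:
  assumes "bij_betw f A B"
  shows "card {x \<in> A. P (f x)} = card {y \<in> B. P y}"
proof (rule bij_betw_same_card, rule bij_betw_imageI)
  show "inj_on f {x \<in> A. P (f x)}"
    using assms by (auto simp: bij_betw_def intro: inj_on_subset)
  show "f ` {x \<in> A. P (f x)} = {y \<in> B. P y}"
    using assms by (auto simp: bij_betw_def)
qed

lemma bij_betw_affine_mod:
  fixes k v c :: nat
  assumes "coprime k v"
  shows "bij_betw (\<lambda>t. (c + k * t) mod v) {..<v} {..<v}"
proof (cases "v = 0")
  case False
  have inj: "inj_on (\<lambda>t. (c + k * t) mod v) {..<v}"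
  proof (rule inj_onI)
    fix x y assume "x \<in> {..<v}" "y \<in> {..<v}" "(c + k * x) mod v = (c + k * y) mod v"
    then have "[k * x = k * y] (mod v)"
      by (metis cong_add_lcancel_nat cong_def)
    then have "[x = y] (mod v)"
      using assms by (metis cong_mult_lcancel_nat)
    then show "x = y"
      using \<open>x \<in> {..<v}\<close> \<open>y \<in> {..<v}\<close> by (simp add: cong_def)
  qed
  moreover have "(\<lambda>t. (c + k * t) mod v) ` {..<v} \<subseteq> {..<v}"
    using False by auto
  ultimately show ?thesis
    by (simp add: bij_betw_def endo_inj_surj)
qed (simp add: bij_betw_def)

lemma card_gcd_eq_totient_lessThan:
  fixes v d :: nat
  assumes "v > 0" "d dvd v"
  shows "card {k. k < v \<and> gcd k v = v div d} = totient d"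
proof -
  have "bij_betw (\<lambda>k. k mod v) {0<..v} {..<v}"
  proof (rule bij_betw_imageI)
    show "inj_on (\<lambda>k. k mod v) {0<..v}"
      by (rule inj_onI) (auto simp: le_less)
    show "(\<lambda>k. k mod v) ` {0<..v} = {..<v}"
    proof
      show "{..<v} \<subseteq> (\<lambda>k. k mod v) ` {0<..v}"
      proof
        fix k assume "k \<in> {..<v}"
        then show "k \<in> (\<lambda>k. k mod v) ` {0<..v}"
          using assms(1) by (cases "k = 0") (auto intro: image_eqI[of _ _ v] image_eqI[of _ _ k])
      qed
    qed (use assms(1) in auto)
  qed
  then have "card {k \<in> {0<..v}. gcd (k mod v) v = v div d} = card {k \<in> {..<v}. gcd k v = v div d}"
    by (rule card_filter_bij_betw)
  moreover have "card {k \<in> {0<..v}. gcd k v = v div d} = totient (v div (v div d))"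
    using assms by (intro card_gcd_eq_totient) auto
  moreover have "v div (v div d) = d"
  proof -
    obtain r where "v = d * r" using assms(2) ..
    moreover from this have "d > 0" "r > 0" using assms(1) by auto
    ultimately show ?thesis by simp
  qed
  ultimately show ?thesis
    by (simp add: gcd_red_nat[symmetric] gcd.commute[of _ v])
qed

lemma card_affine_gcd_eq_totient:
  fixes k v c d n :: nat
  assumes "coprime k v" "v > 0" "d dvd v"
  shows "card {t. t < n * v \<and> gcd (c + k * t) v = v div d} = n * totient d"
proof -
  have "gcd (c + k * (t + v)) v = gcd (c + k * t) v" for t
    by (metis (no_types) add.assoc add.commute distrib_left gcd_add_mult mult.commute gcd.commute)
  then have "card {t. t < n * v \<and> gcd (c + k * t) v = v div d}
      = n * card {t. t < v \<and> gcd (c + k * t) v = v div d}"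
    by (intro card_periodic_below_mult) simp
  also have "{t. t < v \<and> gcd (c + k * t) v = v div d} = {t \<in> {..<v}. gcd ((c + k * t) mod v) v = v div d}"
    by (simp add: gcd_red_nat[symmetric] gcd.commute[of _ v])
  also have "card \<dots> = card {s \<in> {..<v}. gcd s v = v div d}"
    using bij_betw_affine_mod[OF assms(1)] by (rule card_filter_bij_betw)
  also have "\<dots> = totient d"
    using card_gcd_eq_totient_lessThan[OF assms(2,3)] by simp
  finally show ?thesis .
qed

lemma div_eq_div_mult_div:
  fixes e v j :: nat
  assumes "e dvd v" "v dvd j"
  shows "j div e = j div v * (v div e)"
  using assms by (elim dvdE) (auto simp: ac_simps)

lemma div_eq_mult_div_iff:
  fixes e d v j :: nat
  assumes "e dvd v" "d dvd v" "v dvd j" "j > 0"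
  shows "j div e = j * d div v \<longleftrightarrow> e = v div d"
proof -
  have "v > 0" "j div v > 0"
    using assms(3,4) by (auto intro: gr0I)
  moreover have "j * d div v = j div v * d"
    using assms(3) by (metis div_mult_swap mult.commute)
  moreover have "v div e = d \<longleftrightarrow> e = v div d"
    using assms(1,2) \<open>v > 0\<close>
    by (metis dvd_div_mult_self div_mult_self1_is_m dvd_mult_div_cancel gr0I mult_not_zero)
  ultimately show ?thesis
    using div_eq_div_mult_div[OF assms(1,3)] by simp
qed

context group
begin

lemma pow_mod_ord:
  assumes "g \<in> carrier G"
  shows "g [^] (a mod ord g) = g [^] a"
proof -
  have "g [^] a = g [^] (ord g * (a div ord g)) \<otimes> g [^] (a mod ord g)"
    using assms by (simp add: nat_pow_mult)
  also have "g [^] (ord g * (a div ord g)) = \<one>"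
    using assms by (simp add: nat_pow_pow[symmetric])
  finally show ?thesis
    using assms by simp
qed

lemma ord_pow_eq_div_gcd:
  assumes "g \<in> carrier G" "ord g > 0"
  shows "ord (g [^] a) = ord g div gcd a (ord g)"
  using assms ord_pow_gen[OF assms(1), of a] by (simp add: gcd.commute)

lemma ord_pow_coprime_eq_div_gcd_largest_coprime_divisor:
  assumes "g \<in> carrier G" "ord g = i * k" "i > 0" "k > 0" "coprime a k"
  shows "ord (g [^] a) = ord g div gcd a (largest_coprime_divisor i k)"
  using ord_pow_eq_div_gcd[OF assms(1)] gcd_eq_gcd_largest_coprime_divisor[OF assms(3,5)] assms(2-4)
  by simp

lemma cyclic_group_generator:
  assumes "cyclic_group G" "finite (carrier G)"
  obtains g where "g \<in> carrier G" "ord g = order G" "carrier G = (\<lambda>a. g [^] a) ` {..<order G}"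
proof -
  obtain g where g: "g \<in> carrier G" "carrier G = range (\<lambda>n::int. g [^] n)"
    using assms(1) cyclic_group by auto
  then have gen: "generate G {g} = carrier G"
    using generate_pow by auto
  then have ord_g: "ord g = order G"
    using generate_pow_card[OF g(1)] by (simp add: order_def)
  moreover have "ord g \<noteq> 0"
    using ord_g assms(2) order_gt_0_iff_finite by auto
  then have "carrier G = (\<lambda>a. g [^] a) ` {0..ord g - 1}"
    using gen generate_pow_nat[OF g(1)] ord_elems_inf_carrier[OF g(1)] by auto
  moreover have "{0..ord g - 1} = {..<ord g}"
    using \<open>ord g \<noteq> 0\<close> by auto
  ultimately show thesis
    using that g(1) by simp
qed

lemma inj_on_pow_affine:
  assumes "g \<in> carrier G" "ord g = i * k" "r < k"
  shows "inj_on (\<lambda>t. g [^] (r + k * t)) {..<i}"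
proof -
  have "r + k * t < ord g" if "t < i" for t
  proof -
    have "r + k * t < k * Suc t" using assms(3) by simp
    also have "\<dots> \<le> k * i" using that by (intro mult_le_mono2) simp
    finally show ?thesis using assms(2) by (simp add: mult.commute)
  qed
  then have "(\<lambda>t. r + k * t) ` {..<i} \<subseteq> {0..ord g - 1}"
    by fastforce
  then have "inj_on (\<lambda>a. g [^] a) ((\<lambda>t. r + k * t) ` {..<i})"
    using ord_inj[OF assms(1)] by (rule inj_on_subset[rotated])
  moreover have "inj_on (\<lambda>t. r + k * t) {..<i}"
    using assms(3) by (auto simp: inj_on_def)
  ultimately show ?thesis
    using comp_inj_on[of "\<lambda>t. r + k * t" "{..<i}" "\<lambda>a. g [^] a"] by (simp add: o_def)
qed

lemma subgroup_of_cyclic_eq: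
  assumes g: "g \<in> carrier G" "carrier G = (\<lambda>a. g [^] a) ` {..<ord g}"
    and ord_g: "ord g = i * k" and H: "subgroup H G" "card H = i"
  shows "H = (\<lambda>t. g [^] (k * t)) ` {..<i}"
proof -
  have "ord g > 0"
    using g(2) one_closed by (cases "ord g") auto
  then have "k > 0" "i > 0"
    using ord_g by auto
  have pow_card: "x [^] i = \<one>" if "x \<in> H" for x
  proof -
    let ?S = "subgroup_generated G H"
    have "carrier ?S = H"
      using H(1) by (simp add: subgroup.carrier_subgroup_generated_subgroup)
    then show ?thesis
      using group.pow_order_eq_1[OF group_subgroup_generated, of x H] that H(2)
      by (simp add: order_def pow_subgroup_generated)
  qed
  have "H \<subseteq> (\<lambda>t. g [^] (k * t)) ` {..<i}"
  proof
    fix x assume "x \<in> H"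
    then obtain a where a: "a < i * k" "x = g [^] a"
      using g(2) subgroup.subset[OF H(1)] ord_g by auto
    have "g [^] (a * i) = \<one>"
      using pow_card[OF \<open>x \<in> H\<close>] a(2) g(1) by (simp add: nat_pow_pow)
    then have "i * k dvd i * a"
      using pow_eq_id[OF g(1)] ord_g by (simp add: mult.commute)
    then have "k dvd a"
      using \<open>i > 0\<close> by simp
    then obtain t where "a = k * t" ..
    with a show "x \<in> (\<lambda>t. g [^] (k * t)) ` {..<i}"
      by auto
  qed
  moreover have "inj_on (\<lambda>t. g [^] (k * t)) {..<i}"
    using inj_on_pow_affine[OF g(1) ord_g, of 0] \<open>k > 0\<close> by simp
  then have "card ((\<lambda>t. g [^] (k * t)) ` {..<i}) = card H"
    using H(2) by (simp add: card_image)
  ultimately show ?thesis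
    by (intro card_subset_eq) auto
qed

lemma bij_betw_pow_affine_rcoset:
  assumes g: "g \<in> carrier G" "carrier G = (\<lambda>a. g [^] a) ` {..<ord g}"
    and ord_g: "ord g = i * k" and H: "subgroup H G" "card H = i"
  shows "bij_betw (\<lambda>t. g [^] (c mod k + k * t)) {..<i} (H #> g [^] c)"
proof -
  have H_eq: "H = (\<lambda>t. g [^] (k * t)) ` {..<i}"
    using subgroup_of_cyclic_eq[OF g ord_g H] .
  have "ord g > 0"
    using g(2) one_closed by (cases "ord g") auto
  then have "k > 0" "i > 0"
    using ord_g by auto
  have inj: "inj_on (\<lambda>t. g [^] (c mod k + k * t)) {..<i}"
    using inj_on_pow_affine[OF g(1) ord_g] \<open>k > 0\<close> by simp
  have "H #> g [^] c \<subseteq> (\<lambda>t. g [^] (c mod k + k * t)) ` {..<i}"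
  proof
    fix x assume "x \<in> H #> g [^] c"
    then obtain t where "x = g [^] (k * t + c)"
      using H_eq g(1) by (auto simp: r_coset_def nat_pow_mult)
    also have "\<dots> = g [^] ((k * t + c) mod (i * k))"
      using pow_mod_ord[OF g(1)] ord_g by simp
    also have "(k * t + c) mod (i * k) = c mod k + k * ((k * t + c) mod (i * k) div k)"
    proof -
      have "(k * t + c) mod (i * k) mod k = c mod k"
        by (simp add: mod_mod_cancel)
      then show ?thesis
        by (metis add.commute mult_div_mod_eq)
    qed
    finally show "x \<in> (\<lambda>t. g [^] (c mod k + k * t)) ` {..<i}"
    proof (rule image_eqI)
      have "(k * t + c) mod (i * k) < i * k"
        using \<open>i > 0\<close> \<open>k > 0\<close> by simp
      then show "(k * t + c) mod (i * k) div k \<in> {..<i}"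
        by (simp add: less_mult_imp_div_less)
    qed
  qed
  moreover have "card (H #> g [^] c) = i"
    using card_rcosets_equal[of "H #> g [^] c" H] H g(1) inj
    by (simp add: rcosetsI subgroup.subset card_image)
  ultimately have "H #> g [^] c = (\<lambda>t. g [^] (c mod k + k * t)) ` {..<i}"
    using inj by (intro card_subset_eq) (auto simp: card_image)
  with inj show ?thesis
    by (simp add: bij_betw_def)
qed

lemma generating_rcoset_of_cyclic_coprime:
  assumes "cyclic_group G" and g: "g \<in> carrier G" "k dvd ord g"
    and H: "subgroup H G" "H \<subseteq> range (\<lambda>t. g [^] (k * t))"
    and gen: "generate (G Mod H) {H #> g [^] c} = carrier (G Mod H)"
  shows "coprime c k"
proof -
  interpret normal H G
    using comm_group.subgroup_imp_normal[OF cyclic_imp_abelian_group[OF assms(1)] H(1)] .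
  have C: "H #> g [^] c \<in> carrier (G Mod H)"
    using g(1) by (simp add: carrier_FactGroup)
  have "H #> g \<in> generate (G Mod H) {H #> g [^] c}"
    using gen g(1) by (simp add: carrier_FactGroup)
  then obtain m :: int where "H #> g = (H #> g [^] c) [^]\<^bsub>G Mod H\<^esub> m"
    unfolding group.generate_pow[OF factorgroup_is_group C] by blast
  then have "g \<in> H #> (g [^] c) [^] m"
    using FactGroup_int_pow rcos_self[OF g(1) H(1)] g(1) by simp
  then obtain t where "g = g [^] (k * t) \<otimes> (g [^] c) [^] m"
    using H(2) by (auto simp: r_coset_def)
  also have "\<dots> = g [^] int (k * t) \<otimes> g [^] (int c * m)"
    using int_pow_pow[OF g(1), of "int c" m] by (simp only: int_pow_int)
  also have "\<dots> = g [^] (int (k * t) + int c * m)"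
    using int_pow_mult[OF g(1)] by simp
  finally have "g [^] (1::int) = g [^] (int (k * t) + int c * m)"
    using g(1) by simp
  then have "int (ord g) dvd int (k * t) + int c * m - 1"
    using int_pow_eq[OF g(1)] by blast
  moreover have "int k dvd int (ord g)"
    using g(2) by simp
  ultimately have "int k dvd int (k * t) + (int c * m - 1)"
    by (metis dvd_trans add_diff_eq)
  then have "[int c * m = 1] (mod int k)"
    by (simp add: cong_iff_dvd_diff dvd_add_right_iff)
  then have "coprime (int c) (int k)"
    using coprime_iff_invertible_int by blast
  then show ?thesis
    by simp
qed

lemma generating_coset_of_cyclic:
  assumes "cyclic_group G" "finite (carrier G)" "order G = i * k"
    and H: "subgroup H G" "card H = i" and C: "generating_coset G H C"
  obtains g c where "g \<in> carrier G" "ord g = i * k" "coprime c k"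
    "bij_betw (\<lambda>t. g [^] (c + k * t)) {..<i} C"
proof -
  obtain g where g: "g \<in> carrier G" "ord g = i * k" "carrier G = (\<lambda>a. g [^] a) ` {..<ord g}"
    using cyclic_group_generator[OF assms(1,2)] assms(3) by metis
  obtain y where "y \<in> carrier G" "C = H #> y"
    using C unfolding generating_coset_def RCOSETS_def by blast
  moreover obtain c :: nat where "y = g [^] c"
    using \<open>y \<in> carrier G\<close> g(3) by blast
  ultimately have c: "C = H #> g [^] c"
    by simp
  have "k > 0"
    using g(3) one_closed g(2) by (cases k) auto
  have "H \<subseteq> range (\<lambda>t. g [^] (k * t))"
    using subgroup_of_cyclic_eq[OF g(1,3,2) H] by auto
  then have "coprime c k"
    using generating_rcoset_of_cyclic_coprime[OF assms(1) g(1) _ H(1)] C c g(2)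
    by (simp add: generating_coset_def)
  then have "coprime (c mod k) k"
    using \<open>k > 0\<close> by simp
  moreover have "bij_betw (\<lambda>t. g [^] (c mod k + k * t)) {..<i} C"
    using bij_betw_pow_affine_rcoset[OF g(1,3,2) H] c by simp
  ultimately show thesis
    using that g(1,2) by blast
qed

end

theorem lemma3p1:
  fixes G :: "('a, 'b) monoid_scheme" and H C :: "'a set" and i j :: nat
  assumes "i > 0" and "j > 0" and "i dvd j"
    and "group G" and "cyclic_group G" and "finite (carrier G)" and "order G = j"
    and "subgroup H G" and "card H = i"
    and "generating_coset G H C"
  defines "v \<equiv> largest_coprime_divisor i (j div i)"
  defines "u \<equiv> i div v"
  shows "(\<forall>x\<in>C. (j div v) dvd group.ord G x)
       \<and> (\<forall>d. d dvd v \<longrightarrow>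
              card {x\<in>C. group.ord G x = j * d div v} = u * totient d)"
proof -
  interpret G: group G by fact
  define k where "k = j div i"
  have j: "j = i * k"
    using \<open>i dvd j\<close> by (simp add: k_def)
  have "order G = i * k"
    using \<open>order G = j\<close> j by simp
  then obtain g c where g: "g \<in> carrier G" "G.ord g = i * k" and "coprime c k"
    and bij: "bij_betw (\<lambda>t. g [^]\<^bsub>G\<^esub> (c + k * t)) {..<i} C"
    by (rule G.generating_coset_of_cyclic[OF assms(5,6) _ assms(8-10)])
  have v_k: "v = largest_coprime_divisor i k"
    by (simp add: v_def k_def)
  have v: "v dvd i" "coprime v k"
    unfolding v_k using \<open>i > 0\<close>
    by (simp_all add: largest_coprime_divisor_dvd coprime_largest_coprime_divisor)
  then have "v > 0" "v dvd j" "i = u * v" "k > 0"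
    using \<open>i > 0\<close> \<open>j > 0\<close> by (auto simp: j u_def intro: gr0I)
  have ord_power: "G.ord (g [^]\<^bsub>G\<^esub> (c + k * t)) = j div gcd (c + k * t) v" for t
  proof -
    have "coprime (c + k * t) k"
      using \<open>coprime c k\<close> gcd_add_mult[of k t c]
      by (simp add: coprime_iff_gcd_eq_1 gcd.commute add.commute mult.commute)
    then show ?thesis
      using G.ord_pow_coprime_eq_div_gcd_largest_coprime_divisor[OF g \<open>i > 0\<close> \<open>k > 0\<close>] g(2)
      by (simp add: j v_k)
  qed
  have "(j div v) dvd G.ord x" if "x \<in> C" for x
    using that bij ord_power div_eq_div_mult_div[OF gcd_dvd2 \<open>v dvd j\<close>]
    by (auto simp: bij_betw_def)
  moreover have "card {x\<in>C. G.ord x = j * d div v} = u * totient d" if "d dvd v" for d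
  proof -
    have "card {x\<in>C. G.ord x = j * d div v} = card {t. t < u * v \<and> gcd (c + k * t) v = v div d}"
      using card_filter_bij_betw[OF bij, of "\<lambda>x. G.ord x = j * d div v"] \<open>i = u * v\<close>
        div_eq_mult_div_iff[OF gcd_dvd2 \<open>d dvd v\<close> \<open>v dvd j\<close> \<open>j > 0\<close>]
      by (simp add: ord_power)
    then show ?thesis
      using card_affine_gcd_eq_totient[OF _ \<open>v > 0\<close> \<open>d dvd v\<close>] v(2) by (simp add: coprime_commute)
  qed
  ultimately show ?thesis
    by blast
qed

end
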